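(* Let $\Gamma_1=\langle S_1\mid R_1\rangle$ and $\Gamma_2=\langle S_2\mid R_2\rangle$ be discrete groups such that the path metric on the Cayley graph $\mathrm{Cay}(\Gamma_i,S_i)$ is conditionally strictly negative definite for $i=1,2$. Then the path metric on $\mathrm{Cay}(\Gamma_1\ast\Gamma_2,S_1\cup S_2)$ is conditionally strictly negative definite.
   Context: $\Gamma_1\ast\Gamma_2$ is the free product of groups. $\mathrm{Cay}(\Gamma,S)$ is the graph with vertex set $\Gamma$ and edges $\{g,gs\}$, $s\in S\cup S^{-1}$, $gs\ne g$; its path metric is the shortest-path distance. A symmetric real function $K$ on $\Gamma\times\Gamma$ is conditionally strictly negative definite if for every finitely supported $\lambda\colon\Gamma\to\mathbb{C}$, $\lambda\neq0$, with $\sum_g\lambda(g)=0$ one has $\sum_{g,h}\lambda(g)\overline{\lambda(h)}K(g,h)<0$. *)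

theory Defs
  imports "HOL-Algebra.Generated_Groups" "HOL-Library.Complex_Order"
begin

definition fp_reduced :: "('a, 'c) monoid_scheme \<Rightarrow> ('b, 'd) monoid_scheme \<Rightarrow> ('a + 'b) list \<Rightarrow> bool" where
  "fp_reduced G H w \<longleftrightarrow>
     (\<forall>x \<in> set w. case x of Inl a \<Rightarrow> a \<in> carrier G \<and> a \<noteq> \<one>\<^bsub>G\<^esub>
                           | Inr b \<Rightarrow> b \<in> carrier H \<and> b \<noteq> \<one>\<^bsub>H\<^esub>) \<and>
     (\<forall>i. Suc i < length w \<longrightarrow> isl (w ! i) \<noteq> isl (w ! Suc i))"

fun fp_cons :: "('a, 'c) monoid_scheme \<Rightarrow> ('b, 'd) monoid_scheme \<Rightarrow> ('a + 'b) \<Rightarrow> ('a + 'b) list \<Rightarrow> ('a + 'b) list" where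
  "fp_cons G H (Inl a) w =
     (if a = \<one>\<^bsub>G\<^esub> then w else
      (case w of
         Inl b # w' \<Rightarrow> (if a \<otimes>\<^bsub>G\<^esub> b = \<one>\<^bsub>G\<^esub> then w' else Inl (a \<otimes>\<^bsub>G\<^esub> b) # w')
       | _ \<Rightarrow> Inl a # w))"
| "fp_cons G H (Inr a) w =
     (if a = \<one>\<^bsub>H\<^esub> then w else
      (case w of
         Inr b # w' \<Rightarrow> (if a \<otimes>\<^bsub>H\<^esub> b = \<one>\<^bsub>H\<^esub> then w' else Inr (a \<otimes>\<^bsub>H\<^esub> b) # w')
       | _ \<Rightarrow> Inr a # w))"

definition free_product :: "('a, 'c) monoid_scheme \<Rightarrow> ('b, 'd) monoid_scheme \<Rightarrow> ('a + 'b) list monoid" where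
  "free_product G H =
     \<lparr> carrier = {w. fp_reduced G H w},
       mult = (\<lambda>u v. foldr (fp_cons G H) u v),
       one = [] \<rparr>"

definition fp_inl :: "('a, 'c) monoid_scheme \<Rightarrow> 'a \<Rightarrow> ('a + 'b) list" where
  "fp_inl G a = (if a = \<one>\<^bsub>G\<^esub> then [] else [Inl a])"

definition fp_inr :: "('b, 'd) monoid_scheme \<Rightarrow> 'b \<Rightarrow> ('a + 'b) list" where
  "fp_inr H b = (if b = \<one>\<^bsub>H\<^esub> then [] else [Inr b])"

definition cayley_edge :: "('a, 'c) monoid_scheme \<Rightarrow> 'a set \<Rightarrow> 'a \<Rightarrow> 'a \<Rightarrow> bool" where
  "cayley_edge G S g h \<longleftrightarrow>
     g \<in> carrier G \<and> h \<noteq> g \<and>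
     ((\<exists>s \<in> S \<union> (\<lambda>s. inv\<^bsub>G\<^esub> s) ` S. h = g \<otimes>\<^bsub>G\<^esub> s) \<or> (\<exists>s \<in> S \<union> (\<lambda>s. inv\<^bsub>G\<^esub> s) ` S. g = h \<otimes>\<^bsub>G\<^esub> s))"

definition cayley_dist :: "('a, 'c) monoid_scheme \<Rightarrow> 'a set \<Rightarrow> 'a \<Rightarrow> 'a \<Rightarrow> real" where
  "cayley_dist G S g h = real (LEAST n. \<exists>p. length p = Suc n \<and> p ! 0 = g \<and> p ! n = h \<and>
       (\<forall>i<n. cayley_edge G S (p ! i) (p ! Suc i)))"

definition cond_strict_neg_def :: "'a set \<Rightarrow> ('a \<Rightarrow> 'a \<Rightarrow> real) \<Rightarrow> bool" where
  "cond_strict_neg_def X K \<longleftrightarrow>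
     (\<forall>lam :: 'a \<Rightarrow> complex.
        finite {x. lam x \<noteq> 0} \<and> {x. lam x \<noteq> 0} \<subseteq> X \<and> (\<exists>x. lam x \<noteq> 0) \<and>
        (\<Sum>x\<in>{x. lam x \<noteq> 0}. lam x) = 0 \<longrightarrow>
        (\<Sum>x\<in>{x. lam x \<noteq> 0}. \<Sum>y\<in>{x. lam x \<noteq> 0}. lam x * cnj (lam y) * complex_of_real (K x y)) < 0)"

end

theory Submission
  imports Defs
begin

text \<open>Let \<open>x = x\<^sub>0 \<ell>\<close> be a longest word in the support of \<open>\<lambda>\<close>, with last letter \<open>\<ell>\<close> from the
  factor \<open>\<Gamma>\<^sub>i\<close>. The words \<open>x\<^sub>0 c\<close>, \<open>c \<in> \<Gamma>\<^sub>i\<close>, span an isometric copy \<open>E\<close> of \<open>Cay(\<Gamma>\<^sub>i, S\<^sub>i)\<close>,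
  and every path from \<open>E\<close> to a word of the support outside \<open>E\<close> passes through \<open>x\<^sub>0\<close>, since
  no word of the support extends some \<open>x\<^sub>0 c\<close>. Hence \<open>d(e, y) = d(e, x\<^sub>0) + d(x\<^sub>0, y)\<close> across
  the cut point \<open>x\<^sub>0\<close>, and after moving the mass of \<open>\<lambda>\<close> on \<open>E\<close> to \<open>x\<^sub>0\<close> the quadratic form
  splits as \<open>Q(\<lambda>) = Q(\<nu>) + Q(\<lambda>')\<close> with \<open>\<nu>\<close> supported on \<open>E\<close>. The first term is negative by
  the hypothesis on \<open>\<Gamma>\<^sub>i\<close>, the second by induction on the total length of the support.\<close>

section \<open>Walks in Cayley graphs\<close>

inductive walk :: "('a, 'c) monoid_scheme \<Rightarrow> 'a set \<Rightarrow> 'a \<Rightarrow> 'a \<Rightarrow> nat \<Rightarrow> bool"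
  for M S where
  walk_refl: "walk M S g g 0"
| walk_step: "cayley_edge M S g h \<Longrightarrow> walk M S h k n \<Longrightarrow> walk M S g k (Suc n)"

lemma walk_iff_path:
  "walk M S g h n \<longleftrightarrow>
   (\<exists>p. length p = Suc n \<and> p ! 0 = g \<and> p ! n = h \<and> (\<forall>i<n. cayley_edge M S (p ! i) (p ! Suc i)))"
proof
  show "walk M S g h n \<Longrightarrow> \<exists>p. length p = Suc n \<and> p ! 0 = g \<and> p ! n = h \<and>
          (\<forall>i<n. cayley_edge M S (p ! i) (p ! Suc i))"
  proof (induction rule: walk.induct)
    case (walk_refl g)
    show ?case by (intro exI[of _ "[g]"]) auto
  next
    case (walk_step g h k n)
    then obtain p where p: "length p = Suc n" "p ! 0 = h" "p ! n = k"
      "\<forall>i<n. cayley_edge M S (p ! i) (p ! Suc i)" by blast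
    have "\<forall>i<Suc n. cayley_edge M S ((g # p) ! i) ((g # p) ! Suc i)"
      using p walk_step.hyps(1) by (auto simp: less_Suc_eq_0_disj)
    with p show ?case by (intro exI[of _ "g # p"]) auto
  qed
  show "\<exists>p. length p = Suc n \<and> p ! 0 = g \<and> p ! n = h \<and>
          (\<forall>i<n. cayley_edge M S (p ! i) (p ! Suc i)) \<Longrightarrow> walk M S g h n"
  proof (induction n arbitrary: g)
    case 0
    then show ?case by (auto intro: walk_refl)
  next
    case (Suc n)
    then obtain p where p: "length p = Suc (Suc n)" "p ! 0 = g" "p ! Suc n = h"
      "\<forall>i<Suc n. cayley_edge M S (p ! i) (p ! Suc i)" by blast
    then obtain q where q: "p = g # q" by (cases p) auto
    have "walk M S (q ! 0) h n"
      using p q by (intro Suc.IH exI[of _ q]) auto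
    moreover have "cayley_edge M S g (q ! 0)"
      using p(4)[rule_format, of 0] q by simp
    ultimately show ?case by (rule walk_step[rotated])
  qed
qed

lemma cayley_dist_Least_walk: "cayley_dist M S g h = real (LEAST n. walk M S g h n)"
  unfolding cayley_dist_def walk_iff_path ..

lemma cayley_dist_le_walk: "walk M S g h n \<Longrightarrow> cayley_dist M S g h \<le> n"
  unfolding cayley_dist_Least_walk by (simp add: Least_le)

lemma cayley_dist_attained:
  assumes "walk M S g h n"
  obtains m where "walk M S g h m" "cayley_dist M S g h = real m"
  using LeastI[of "walk M S g h", OF assms] that unfolding cayley_dist_Least_walk by blast

lemma cayley_dist_nonneg: "cayley_dist M S g h \<ge> 0"
  unfolding cayley_dist_Least_walk by simp

lemma cayley_dist_self [simp]: "cayley_dist M S g g = 0"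
  using cayley_dist_le_walk[OF walk_refl, of M S g] cayley_dist_nonneg[of M S g g] by simp

lemma walk_append: "walk M S g h m \<Longrightarrow> walk M S h k n \<Longrightarrow> walk M S g k (m + n)"
  by (induction rule: walk.induct) (auto intro: walk_step)

lemma walk_edge: "cayley_edge M S g h \<Longrightarrow> walk M S g h 1"
  using walk_step[OF _ walk_refl] by simp

lemma walk_start_in_carrier: "walk M S g h n \<Longrightarrow> h \<in> carrier M \<Longrightarrow> g \<in> carrier M"
  by (induction rule: walk.induct) (auto simp: cayley_edge_def)

lemma cayley_edge_sym: "cayley_edge M S g h \<Longrightarrow> h \<in> carrier M \<Longrightarrow> cayley_edge M S h g"
  unfolding cayley_edge_def by auto

lemma walk_sym: "walk M S g h n \<Longrightarrow> h \<in> carrier M \<Longrightarrow> walk M S h g n"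
proof (induction rule: walk.induct)
  case (walk_refl g)
  show ?case by (rule walk.walk_refl)
next
  case (walk_step g h k n)
  have "h \<in> carrier M" using walk_start_in_carrier[OF walk_step.hyps(2) walk_step.prems] .
  then have "walk M S h g 1" using walk_step.hyps(1) by (blast intro: walk_edge cayley_edge_sym)
  from walk_append[OF walk_step.IH[OF walk_step.prems] this] show ?case by simp
qed

lemma cayley_dist_sym:
  "g \<in> carrier M \<Longrightarrow> h \<in> carrier M \<Longrightarrow> cayley_dist M S g h = cayley_dist M S h g"
proof -
  assume "g \<in> carrier M" "h \<in> carrier M"
  then have "walk M S g h = walk M S h g" by (intro ext iffI) (auto intro: walk_sym)
  then show ?thesis unfolding cayley_dist_Least_walk by simp
qed

lemma cayley_dist_triangle:
  assumes "walk M S g h m" "walk M S h k n"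
  shows "cayley_dist M S g k \<le> cayley_dist M S g h + cayley_dist M S h k"
proof -
  obtain m' n' where "walk M S g h m'" "cayley_dist M S g h = real m'"
    "walk M S h k n'" "cayley_dist M S h k = real n'"
    using cayley_dist_attained assms by metis
  then have "cayley_dist M S g k \<le> real (m' + n')"
    by (intro cayley_dist_le_walk walk_append)
  with \<open>cayley_dist M S g h = real m'\<close> \<open>cayley_dist M S h k = real n'\<close> show ?thesis
    by simp
qed

lemma walk_map:
  assumes f: "\<And>u v. u \<in> carrier M \<Longrightarrow> v \<in> carrier M \<Longrightarrow> cayley_edge M S u v \<Longrightarrow>
                 f u = f v \<or> cayley_edge M' S' (f u) (f v)"
  shows "walk M S u v n \<Longrightarrow> v \<in> carrier M \<Longrightarrow> \<exists>m\<le>n. walk M' S' (f u) (f v) m"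
proof (induction rule: walk.induct)
  case (walk_refl g)
  show ?case by (blast intro: walk.walk_refl)
next
  case (walk_step g h k n)
  have h: "h \<in> carrier M" using walk_start_in_carrier[OF walk_step.hyps(2) walk_step.prems] .
  have g: "g \<in> carrier M" using walk_step.hyps(1) by (simp add: cayley_edge_def)
  obtain m where m: "m \<le> n" "walk M' S' (f h) (f k) m"
    using walk_step.IH[OF walk_step.prems] by blast
  show ?case
  proof (cases "f g = f h")
    case False
    then have "walk M' S' (f g) (f k) (Suc m)"
      using f[OF g h walk_step.hyps(1)] m by (blast intro: walk.walk_step)
    then show ?thesis using m by auto
  next
    case True
    then show ?thesis using m by (intro exI[of _ m]) auto
  qed
qed

lemma cayley_dist_map_le:
  assumes f: "\<And>u v. u \<in> carrier M \<Longrightarrow> v \<in> carrier M \<Longrightarrow> cayley_edge M S u v \<Longrightarrow>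
                 f u = f v \<or> cayley_edge M' S' (f u) (f v)"
    and "walk M S u v n" "v \<in> carrier M"
  shows "cayley_dist M' S' (f u) (f v) \<le> cayley_dist M S u v"
proof -
  obtain k where k: "walk M S u v k" "cayley_dist M S u v = real k"
    using cayley_dist_attained[OF assms(2)] by blast
  obtain m where "m \<le> k" "walk M' S' (f u) (f v) m"
    using walk_map[of M S f M' S', OF f k(1) assms(3)] by blast
  then show ?thesis using k(2) cayley_dist_le_walk by fastforce
qed

lemma walk_iso:
  assumes "bij f" and edge: "\<And>u v. cayley_edge M' S' (f u) (f v) \<longleftrightarrow> cayley_edge M S u v"
  shows "walk M' S' (f g) (f h) n \<longleftrightarrow> walk M S g h n"
proof
  show "walk M' S' (f g) (f h) n \<Longrightarrow> walk M S g h n"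
  proof (induction "f g" "f h" n arbitrary: g rule: walk.induct)
    case walk_refl
    then show ?case using bij_is_inj[OF \<open>bij f\<close>] by (auto dest: injD intro: walk.walk_refl)
  next
    case (walk_step h' n)
    obtain k where k: "h' = f k" using bij_is_surj[OF \<open>bij f\<close>] by (metis surj_f_inv_f)
    have "cayley_edge M S g k" using walk_step.hyps(1) edge k by simp
    moreover have "walk M S k h n" using walk_step.hyps(3) k by simp
    ultimately show ?case by (rule walk.walk_step)
  qed
  show "walk M S g h n \<Longrightarrow> walk M' S' (f g) (f h) n"
  proof (induction rule: walk.induct)
    case (walk_step g h k n)
    then show ?case using edge by (blast intro: walk.walk_step)
  qed (rule walk.walk_refl)
qed

lemma cayley_dist_iso:
  assumes "bij f" and "\<And>u v. cayley_edge M' S' (f u) (f v) \<longleftrightarrow> cayley_edge M S u v"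
  shows "cayley_dist M' S' (f g) (f h) = cayley_dist M S g h"
  unfolding cayley_dist_Least_walk walk_iso[OF assms] ..

lemma cayley_edge_translate:
  fixes G (structure)
  assumes "group G" "S \<subseteq> carrier G" "a \<in> carrier G" "cayley_edge G S u v" "v \<in> carrier G"
  shows "cayley_edge G S (a \<otimes> u) (a \<otimes> v)"
proof -
  interpret group G by fact
  have u: "u \<in> carrier G" and "v \<noteq> u" using assms(4) by (auto simp: cayley_edge_def)
  then have "a \<otimes> v \<noteq> a \<otimes> u" using assms(3,5) by simp
  moreover have "s \<in> carrier G" if "s \<in> S \<union> (\<lambda>s. inv s) ` S" for s using that assms(2) by auto
  ultimately show ?thesis
    using assms(3-5) u unfolding cayley_edge_def by (auto simp: m_assoc)
qed

lemma walk_translate: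
  fixes G (structure)
  assumes "group G" "S \<subseteq> carrier G" "a \<in> carrier G"
  shows "walk G S u v n \<Longrightarrow> v \<in> carrier G \<Longrightarrow> walk G S (a \<otimes> u) (a \<otimes> v) n"
proof (induction rule: walk.induct)
  case (walk_step g h k n)
  have "h \<in> carrier G" using walk_start_in_carrier[OF walk_step.hyps(2) walk_step.prems] .
  with walk_step show ?case by (blast intro: walk.walk_step cayley_edge_translate[OF assms])
qed (rule walk_refl)

lemma walk_one_generate:
  fixes G (structure)
  assumes "group G" "S \<subseteq> carrier G" "g \<in> generate G S"
  shows "\<exists>n. walk G S \<one> g n"
proof -
  interpret group G by fact
  have gen: "\<exists>n. walk G S \<one> s n" if "s \<in> S \<union> (\<lambda>s. inv s) ` S" for s
  proof (cases "s = \<one>")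
    case False
    with that have "cayley_edge G S \<one> s" using assms(2) unfolding cayley_edge_def by force
    then show ?thesis by (blast intro: walk_edge)
  qed (blast intro: walk_refl)
  from assms(3) show ?thesis
  proof (induction rule: generate.induct)
    case (eng h1 h2)
    then obtain n1 n2 where "walk G S \<one> h1 n1" "walk G S \<one> h2 n2" by blast
    moreover have "h1 \<in> carrier G" "h2 \<in> carrier G"
      using eng.hyps generate_in_carrier assms(2) by auto
    ultimately have "walk G S \<one> h1 n1" "walk G S h1 (h1 \<otimes> h2) n2"
      using walk_translate[OF assms(1,2), of h1 \<one> h2 n2] by auto
    then show ?case by (blast intro: walk_append)
  qed (use gen in \<open>auto intro: walk_refl\<close>)
qed

lemma group_walk_exists:
  assumes "group G" "S \<subseteq> carrier G" "generate G S = carrier G" "g \<in> carrier G" "h \<in> carrier G"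
  shows "\<exists>n. walk G S g h n"
proof -
  obtain m n where "walk G S \<one>\<^bsub>G\<^esub> g m" "walk G S \<one>\<^bsub>G\<^esub> h n"
    using walk_one_generate[OF assms(1,2)] assms(3-5) by blast
  then show ?thesis using walk_sym walk_append assms(4) by metis
qed

section \<open>Conditionally negative kernels\<close>

definition kernel_form ::
    "('x \<Rightarrow> 'x \<Rightarrow> real) \<Rightarrow> 'x set \<Rightarrow> ('x \<Rightarrow> complex) \<Rightarrow> ('x \<Rightarrow> complex) \<Rightarrow> complex" where
  "kernel_form K A u v = (\<Sum>x\<in>A. \<Sum>y\<in>A. u x * cnj (v y) * complex_of_real (K x y))"

lemma kernel_form_zero_left: "(\<And>x. u x = 0) \<Longrightarrow> kernel_form K A u v = 0"
  by (simp add: kernel_form_def)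

lemma kernel_form_mono_neutral:
  assumes "finite B" "A \<subseteq> B" "\<And>x. x \<in> B - A \<Longrightarrow> u x = 0" "\<And>x. x \<in> B - A \<Longrightarrow> v x = 0"
  shows "kernel_form K B u v = kernel_form K A u v"
proof -
  have "kernel_form K B u v = (\<Sum>x\<in>B. \<Sum>y\<in>A. u x * cnj (v y) * complex_of_real (K x y))"
    unfolding kernel_form_def using assms by (intro sum.cong refl sum.mono_neutral_right) auto
  also have "\<dots> = kernel_form K A u v"
    unfolding kernel_form_def using assms by (intro sum.mono_neutral_right) auto
  finally show ?thesis .
qed

lemma kernel_form_cong:
  "(\<And>x. x \<in> A \<Longrightarrow> u x = u' x) \<Longrightarrow> (\<And>x. x \<in> A \<Longrightarrow> v x = v' x) \<Longrightarrow>
   kernel_form K A u v = kernel_form K A u' v'"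
  unfolding kernel_form_def by simp

lemma kernel_form_reindex:
  assumes "inj_on e C" "\<And>c c'. c \<in> C \<Longrightarrow> c' \<in> C \<Longrightarrow> K (e c) (e c') = k c c'"
  shows "kernel_form K (e ` C) u v = kernel_form k C (u \<circ> e) (v \<circ> e)"
  unfolding kernel_form_def sum.reindex[OF assms(1)] using assms(2) by simp

lemma cond_strict_neg_defD:
  assumes "cond_strict_neg_def X K" "finite A" "A \<subseteq> X" "\<And>x. x \<notin> A \<Longrightarrow> u x = 0"
    and "sum u A = 0" "\<exists>x. u x \<noteq> 0"
  shows "kernel_form K A u u < 0"
proof -
  have supp: "{x. u x \<noteq> 0} \<subseteq> A" using assms(4) by blast
  have "sum u {x. u x \<noteq> 0} = 0"
    using assms(2,5) supp by (metis (mono_tags) DiffD2 mem_Collect_eq sum.mono_neutral_right)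
  moreover have "finite {x. u x \<noteq> 0}" "{x. u x \<noteq> 0} \<subseteq> X"
    using finite_subset[OF supp assms(2)] supp assms(3) by auto
  ultimately have "kernel_form K {x. u x \<noteq> 0} u u < 0"
    using assms(1,6) unfolding cond_strict_neg_def_def kernel_form_def by blast
  moreover have "kernel_form K A u u = kernel_form K {x. u x \<noteq> 0} u u"
    using assms(2) supp by (intro kernel_form_mono_neutral) auto
  ultimately show ?thesis by simp
qed

lemma cond_strict_neg_defI:
  assumes "\<And>A u. finite A \<Longrightarrow> A \<subseteq> X \<Longrightarrow> (\<And>x. x \<notin> A \<Longrightarrow> u x = 0) \<Longrightarrow> sum u A = 0 \<Longrightarrow>
             \<exists>x. u x \<noteq> 0 \<Longrightarrow> kernel_form K A u u < 0"
  shows "cond_strict_neg_def X K"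
  unfolding cond_strict_neg_def_def
proof (intro allI impI)
  fix lam :: "'a \<Rightarrow> complex"
  assume "finite {x. lam x \<noteq> 0} \<and> {x. lam x \<noteq> 0} \<subseteq> X \<and> (\<exists>x. lam x \<noteq> 0) \<and>
    (\<Sum>x\<in>{x. lam x \<noteq> 0}. lam x) = 0"
  then show "(\<Sum>x\<in>{x. lam x \<noteq> 0}. \<Sum>y\<in>{x. lam x \<noteq> 0}. lam x * cnj (lam y) * complex_of_real (K x y)) < 0"
    using assms[of "{x. lam x \<noteq> 0}" lam] unfolding kernel_form_def by blast
qed

lemma cond_strict_neg_def_image:
  assumes csnd: "cond_strict_neg_def C k" and inj: "inj_on e C"
    and iso: "\<And>c c'. c \<in> C \<Longrightarrow> c' \<in> C \<Longrightarrow> K (e c) (e c') = k c c'"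
  shows "cond_strict_neg_def (e ` C) K"
proof (rule cond_strict_neg_defI)
  fix A and u :: "_ \<Rightarrow> complex"
  assume A: "finite A" "A \<subseteq> e ` C" and u: "\<And>x. x \<notin> A \<Longrightarrow> u x = 0" "sum u A = 0" "\<exists>x. u x \<noteq> 0"
  define A' where "A' = {c \<in> C. e c \<in> A}"
  define w where "w c = (if c \<in> A' then u (e c) else 0)" for c
  have eA': "e ` A' = A" and injA': "inj_on e A'"
    using A(2) inj unfolding A'_def by (auto intro: inj_on_subset)
  have "finite A'" using A(1) eA' injA' finite_image_iff by metis
  moreover have "sum w A' = 0"
    using u(2) unfolding w_def eA'[symmetric] sum.reindex[OF injA'] by simp
  moreover have "\<exists>c. w c \<noteq> 0"
    using u eA' unfolding w_def by (metis imageE)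
  ultimately have "kernel_form k A' w w < 0"
    by (intro cond_strict_neg_defD[OF csnd]) (auto simp: A'_def w_def)
  moreover have "kernel_form K A u u = kernel_form k A' w w"
    unfolding eA'[symmetric] using injA' iso
    by (subst kernel_form_reindex[where k = k]) (auto simp: A'_def w_def intro!: kernel_form_cong)
  ultimately show "kernel_form K A u u < 0" by simp
qed

lemma kernel_form_additive_eq_0:
  assumes "sum u A = 0" "sum v A = 0"
    and "\<And>x y. x \<in> A \<Longrightarrow> y \<in> A \<Longrightarrow> u x \<noteq> 0 \<Longrightarrow> v y \<noteq> 0 \<Longrightarrow> K x y = f x + g y"
  shows "kernel_form K A u v = 0"
proof -
  have "kernel_form K A u v = (\<Sum>x\<in>A. \<Sum>y\<in>A. u x * cnj (v y) * complex_of_real (f x + g y))"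
    unfolding kernel_form_def using assms(3) by (intro sum.cong refl) (metis mult_eq_0_iff complex_cnj_zero)
  also have "\<dots> = (\<Sum>x\<in>A. \<Sum>y\<in>A. u x * complex_of_real (f x) * cnj (v y))
                  + (\<Sum>x\<in>A. \<Sum>y\<in>A. u x * (cnj (v y) * complex_of_real (g y)))"
    by (simp add: algebra_simps sum.distrib)
  also have "\<dots> = (\<Sum>x\<in>A. u x * complex_of_real (f x)) * cnj (sum v A)
                  + sum u A * (\<Sum>y\<in>A. cnj (v y) * complex_of_real (g y))"
    by (simp add: sum_product)
  finally show ?thesis using assms(1,2) by simp
qed

lemma kernel_form_add_orthogonal:
  assumes "sum u A = 0" "sum v A = 0"
    and "\<And>x y. x \<in> A \<Longrightarrow> y \<in> A \<Longrightarrow> u x \<noteq> 0 \<Longrightarrow> v y \<noteq> 0 \<Longrightarrow>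
            K x y = f x + g y \<and> K y x = f x + g y"
  shows "kernel_form K A (\<lambda>x. u x + v x) (\<lambda>x. u x + v x) = kernel_form K A u u + kernel_form K A v v"
proof -
  have "kernel_form K A u v = 0"
    using assms by (intro kernel_form_additive_eq_0[where f = f and g = g]) auto
  moreover have "kernel_form K A v u = 0"
    using assms by (intro kernel_form_additive_eq_0[where f = g and g = f]) (auto simp: add.commute)
  ultimately show ?thesis
    by (simp add: kernel_form_def algebra_simps sum.distrib)
qed

text \<open>The restriction of \<open>u\<close> to \<open>E\<close>, balanced by the mass \<open>M\<close> placed at \<open>x0\<close>, is orthogonal
  to the remainder, because the kernel is additive across the cut point \<open>x0\<close>.\<close>
lemma kernel_form_cut_point_split:
  assumes x0: "x0 \<in> E"
    and cut: "\<And>x y. x \<in> E \<Longrightarrow> y \<in> insert x0 (A - E) \<Longrightarrow>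
                K x y = K x x0 + K x0 y \<and> K y x = K x y"
    and A: "finite A" and u: "\<And>x. x \<notin> A \<Longrightarrow> u x = 0" "sum u A = 0"
  obtains v w where "\<And>x. x \<notin> insert x0 A \<inter> E \<Longrightarrow> v x = 0" "sum v (insert x0 A \<inter> E) = 0"
    and "\<And>x. x \<notin> insert x0 (A - E) \<Longrightarrow> w x = 0" "sum w (insert x0 (A - E)) = 0"
    and "u = (\<lambda>x. v x + w x)"
    and "kernel_form K A u u =
           kernel_form K (insert x0 A \<inter> E) v v + kernel_form K (insert x0 (A - E)) w w"
proof -
  define U where "U = insert x0 A"
  define B where "B = insert x0 (A - E)"
  define M where "M = (\<Sum>x\<in>U. if x \<in> E then u x else 0)"
  define v where "v x = (if x \<in> E then u x else 0) - (if x = x0 then M else 0)" for x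
  define w where "w x = u x - v x" for x
  have U: "finite U" "A \<subseteq> U" "B \<subseteq> U" "x0 \<in> U" using A unfolding U_def B_def by auto
  have "sum u A = sum u U" using U u(1) by (intro sum.mono_neutral_left) auto
  then have sum_u: "sum u U = 0" using u(2) by simp
  have sum_v: "sum v U = 0" using U(1,4) by (simp add: v_def M_def sum_subtractf)
  have sum_w: "sum w U = 0" using sum_u sum_v by (simp add: w_def sum_subtractf)
  have v_supp: "v x \<noteq> 0 \<Longrightarrow> x \<in> U \<inter> E" for x using u(1) x0 by (auto simp: v_def U_def split: if_splits)
  have w_supp: "w x \<noteq> 0 \<Longrightarrow> x \<in> B" for x using u(1) x0 by (auto simp: w_def v_def B_def split: if_splits)
  have "sum v (U \<inter> E) = sum v U" using U v_supp by (intro sum.mono_neutral_left) auto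
  then have sum_v': "sum v (U \<inter> E) = 0" using sum_v by simp
  have "sum w B = sum w U" using U w_supp by (intro sum.mono_neutral_left) auto
  then have sum_w': "sum w B = 0" using sum_w by simp
  have "kernel_form K A u u = kernel_form K U u u"
    using U u(1) by (intro kernel_form_mono_neutral[symmetric]) auto
  also have "\<dots> = kernel_form K U (\<lambda>x. v x + w x) (\<lambda>x. v x + w x)"
    by (simp add: w_def)
  also have "\<dots> = kernel_form K U v v + kernel_form K U w w"
  proof (rule kernel_form_add_orthogonal[OF sum_v sum_w])
    fix x y assume "v x \<noteq> 0" "w y \<noteq> 0"
    then have "x \<in> E" "y \<in> insert x0 (A - E)" using v_supp w_supp unfolding B_def by auto
    from cut[OF this] show "K x y = K x x0 + K x0 y \<and> K y x = K x x0 + K x0 y" by simp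
  qed
  also have "kernel_form K U v v = kernel_form K (U \<inter> E) v v"
    using U v_supp by (intro kernel_form_mono_neutral) auto
  also have "kernel_form K U w w = kernel_form K B w w"
    using U w_supp by (intro kernel_form_mono_neutral) auto
  finally have "kernel_form K A u u = kernel_form K (U \<inter> E) v v + kernel_form K B w w" .
  moreover have "u = (\<lambda>x. v x + w x)" by (simp add: w_def)
  ultimately show thesis
    using that[of v w] v_supp w_supp sum_v' sum_w' unfolding U_def B_def by blast
qed

lemma kernel_form_neg_cut_point:
  assumes csnd_E: "cond_strict_neg_def E K" and x0: "x0 \<in> E"
    and cut: "\<And>x y. x \<in> E \<Longrightarrow> y \<in> insert x0 (A - E) \<Longrightarrow>
                K x y = K x x0 + K x0 y \<and> K y x = K x y"
    and A: "finite A" and u: "\<And>x. x \<notin> A \<Longrightarrow> u x = 0" "sum u A = 0" "\<exists>x. u x \<noteq> 0"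
    and rest: "\<And>w. (\<And>x. x \<notin> insert x0 (A - E) \<Longrightarrow> w x = 0) \<Longrightarrow> sum w (insert x0 (A - E)) = 0 \<Longrightarrow>
                 \<exists>x. w x \<noteq> 0 \<Longrightarrow> kernel_form K (insert x0 (A - E)) w w < 0"
  shows "kernel_form K A u u < 0"
proof -
  obtain v w where v: "\<And>x. x \<notin> insert x0 A \<inter> E \<Longrightarrow> v x = 0" "sum v (insert x0 A \<inter> E) = 0"
    and w: "\<And>x. x \<notin> insert x0 (A - E) \<Longrightarrow> w x = 0" "sum w (insert x0 (A - E)) = 0"
    and vw: "u = (\<lambda>x. v x + w x)"
    and split: "kernel_form K A u u =
                  kernel_form K (insert x0 A \<inter> E) v v + kernel_form K (insert x0 (A - E)) w w"
    using x0 cut A u(1,2) by (rule kernel_form_cut_point_split) (assumption | rule that)+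
  have v_neg: "kernel_form K (insert x0 A \<inter> E) v v < 0" if "\<exists>x. v x \<noteq> 0"
    using A v that by (intro cond_strict_neg_defD[OF csnd_E]) auto
  have w_neg: "kernel_form K (insert x0 (A - E)) w w < 0" if "\<exists>x. w x \<noteq> 0"
    using w that by (rule rest)
  have v_nonpos: "kernel_form K (insert x0 A \<inter> E) v v \<le> 0"
    using v_neg kernel_form_zero_left[of v] by (cases "\<exists>x. v x \<noteq> 0") auto
  have w_nonpos: "kernel_form K (insert x0 (A - E)) w w \<le> 0"
    using w_neg kernel_form_zero_left[of w] by (cases "\<exists>x. w x \<noteq> 0") auto
  have "(\<exists>x. v x \<noteq> 0) \<or> (\<exists>x. w x \<noteq> 0)" using u(3) vw by auto
  then show ?thesis
    unfolding split using v_neg w_neg v_nonpos w_nonpos by (meson add_neg_nonpos add_nonpos_neg)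
qed

lemma free_product_simps [simp]:
  "carrier (free_product G H) = {w. fp_reduced G H w}"
  "u \<otimes>\<^bsub>free_product G H\<^esub> v = foldr (fp_cons G H) u v"
  "\<one>\<^bsub>free_product G H\<^esub> = []"
  by (simp_all add: free_product_def)

definition fp_letter :: "('a, 'c) monoid_scheme \<Rightarrow> ('b, 'd) monoid_scheme \<Rightarrow> 'a + 'b \<Rightarrow> bool" where
  "fp_letter G H l \<longleftrightarrow>
     (case l of Inl a \<Rightarrow> a \<in> carrier G \<and> a \<noteq> \<one>\<^bsub>G\<^esub> | Inr b \<Rightarrow> b \<in> carrier H \<and> b \<noteq> \<one>\<^bsub>H\<^esub>)"

lemma fp_letter_simps [simp]:
  "fp_letter G H (Inl a) \<longleftrightarrow> a \<in> carrier G \<and> a \<noteq> \<one>\<^bsub>G\<^esub>"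
  "fp_letter G H (Inr b) \<longleftrightarrow> b \<in> carrier H \<and> b \<noteq> \<one>\<^bsub>H\<^esub>"
  by (simp_all add: fp_letter_def)

lemma fp_reduced_iff:
  "fp_reduced G H w \<longleftrightarrow> (\<forall>l\<in>set w. fp_letter G H l) \<and> successively (\<lambda>l l'. isl l \<noteq> isl l') w"
  unfolding fp_reduced_def successively_conv_nth fp_letter_def by simp

lemma fp_reduced_Nil [simp]: "fp_reduced G H []"
  by (simp add: fp_reduced_iff)

lemma fp_reduced_Cons:
  "fp_reduced G H (l # w) \<longleftrightarrow> fp_letter G H l \<and> fp_reduced G H w \<and> (w = [] \<or> isl l \<noteq> isl (hd w))"
  unfolding fp_reduced_iff successively_Cons by auto

lemma fp_reduced_append:
  "fp_reduced G H (u @ v) \<longleftrightarrow> fp_reduced G H u \<and> fp_reduced G H v \<and>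
     (u = [] \<or> v = [] \<or> isl (last u) \<noteq> isl (hd v))"
  unfolding fp_reduced_iff successively_append_iff by auto

lemma foldr_fp_cons_reduced: "fp_reduced G H (u @ v) \<Longrightarrow> foldr (fp_cons G H) u v = u @ v"
proof (induction u)
  case (Cons l u)
  then have "fp_letter G H l" "foldr (fp_cons G H) u v = u @ v" "u @ v = [] \<or> isl l \<noteq> isl (hd (u @ v))"
    by (simp_all add: fp_reduced_Cons)
  then show ?case by (cases l; cases "u @ v") (auto split: sum.splits)
qed simp

definition no_last_Inl :: "('a + 'b) list \<Rightarrow> bool" where
  "no_last_Inl w \<longleftrightarrow> w = [] \<or> \<not> isl (last w)"

definition no_last_Inr :: "('a + 'b) list \<Rightarrow> bool" where
  "no_last_Inr w \<longleftrightarrow> w = [] \<or> isl (last w)"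

lemma fp_inl_one [simp]: "fp_inl G \<one>\<^bsub>G\<^esub> = []"
  and fp_inr_one [simp]: "fp_inr H \<one>\<^bsub>H\<^esub> = []"
  by (simp_all add: fp_inl_def fp_inr_def)

lemma fp_inl_eq_iff [simp]: "fp_inl G a = fp_inl G b \<longleftrightarrow> a = b"
  by (simp add: fp_inl_def)

lemma fp_reduced_append_fp_inl:
  "fp_reduced G H x \<Longrightarrow> no_last_Inl x \<Longrightarrow> a \<in> carrier G \<Longrightarrow> fp_reduced G H (x @ fp_inl G a)"
  by (auto simp: fp_inl_def fp_reduced_append fp_reduced_Cons no_last_Inl_def)

lemma fp_reduced_split_last_Inl:
  assumes "fp_reduced G H u" "\<one>\<^bsub>G\<^esub> \<in> carrier G"
  obtains x a where "fp_reduced G H x" "no_last_Inl x" "a \<in> carrier G" "u = x @ fp_inl G a"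
proof (cases "u \<noteq> [] \<and> isl (last u)")
  case True
  then obtain a where u: "u = butlast u @ [Inl a]"
    by (metis append_butlast_last_id sum.collapse(1))
  with assms(1) have "fp_reduced G H (butlast u @ [Inl a])" by simp
  then have "fp_reduced G H (butlast u)" "no_last_Inl (butlast u)"
    "a \<in> carrier G" "a \<noteq> \<one>\<^bsub>G\<^esub>"
    unfolding fp_reduced_append no_last_Inl_def by (auto simp: fp_reduced_Cons)
  with u show ?thesis by (intro that) (auto simp: fp_inl_def)
next
  case False
  then show ?thesis using that[of u "\<one>\<^bsub>G\<^esub>"] assms by (auto simp: no_last_Inl_def)
qed

lemma fp_mult_fp_inl:
  fixes G :: "('a, 'c) monoid_scheme" (structure)
  assumes "group G" "fp_reduced G H x" "no_last_Inl x" "a \<in> carrier G" "s \<in> carrier G"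
  shows "(x @ fp_inl G a) \<otimes>\<^bsub>free_product G H\<^esub> fp_inl G s = x @ fp_inl G (a \<otimes>\<^bsub>G\<^esub> s)"
proof -
  interpret group G by fact
  have "foldr (fp_cons G H) (fp_inl G a) (fp_inl G s) = fp_inl G (a \<otimes> s)"
    using assms(4,5) by (auto simp: fp_inl_def)
  then show ?thesis
    using foldr_fp_cons_reduced[OF fp_reduced_append_fp_inl[OF assms(2,3)]] assms(4,5) by simp
qed

lemma m_inv_eqI:
  assumes "y \<in> carrier M" "x \<otimes>\<^bsub>M\<^esub> y = \<one>\<^bsub>M\<^esub>" "y \<otimes>\<^bsub>M\<^esub> x = \<one>\<^bsub>M\<^esub>"
    and "\<And>y'. y' \<in> carrier M \<Longrightarrow> y' \<otimes>\<^bsub>M\<^esub> x = \<one>\<^bsub>M\<^esub> \<Longrightarrow> y' = y"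
  shows "inv\<^bsub>M\<^esub> x = y"
  unfolding m_inv_def
proof (rule the_equality)
  show "y \<in> carrier M \<and> x \<otimes>\<^bsub>M\<^esub> y = \<one>\<^bsub>M\<^esub> \<and> y \<otimes>\<^bsub>M\<^esub> x = \<one>\<^bsub>M\<^esub>"
    using assms(1-3) by blast
qed (use assms(4) in blast)

lemma fp_mult_fp_inl_eq_Nil:
  fixes G :: "('a, 'c) monoid_scheme" (structure)
  assumes "group G" "fp_reduced G H y" "s \<in> carrier G"
    and "y \<otimes>\<^bsub>free_product G H\<^esub> fp_inl G s = []"
  shows "y = fp_inl G (inv\<^bsub>G\<^esub> s)"
proof -
  interpret group G by fact
  obtain x a where xa: "fp_reduced G H x" "no_last_Inl x" "a \<in> carrier G" "y = x @ fp_inl G a"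
    using fp_reduced_split_last_Inl[OF assms(2)] by blast
  then have "x @ fp_inl G (a \<otimes> s) = []"
    using assms(4) fp_mult_fp_inl[OF assms(1) xa(1-3) assms(3)] by simp
  then have "x = []" "a \<otimes> s = \<one>" by (auto simp: fp_inl_def split: if_splits)
  then show ?thesis using xa assms(3) inv_equality by auto
qed

lemma fp_inv_fp_inl:
  fixes G :: "('a, 'c) monoid_scheme" (structure)
  assumes "group G" "s \<in> carrier G"
  shows "inv\<^bsub>free_product G H\<^esub> (fp_inl G s) = fp_inl G (inv\<^bsub>G\<^esub> s)"
proof -
  interpret group G by fact
  have mult: "fp_inl G a \<otimes>\<^bsub>free_product G H\<^esub> fp_inl G b = fp_inl G (a \<otimes> b)"
    if "a \<in> carrier G" "b \<in> carrier G" for a b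
    using fp_mult_fp_inl[OF assms(1) fp_reduced_Nil _ that, of H] by (simp add: no_last_Inl_def)
  show ?thesis
    using assms fp_reduced_append_fp_inl[of G H "[]" "inv s"] mult[of s "inv s"] mult[of "inv s" s]
    by (intro m_inv_eqI fp_mult_fp_inl_eq_Nil) (auto simp: no_last_Inl_def)
qed

definition fp_swap :: "('a + 'b) list \<Rightarrow> ('b + 'a) list" where
  "fp_swap = map (case_sum Inr Inl)"

lemma fp_swap_swap [simp]: "fp_swap (fp_swap w) = w"
  by (induction w) (auto simp: fp_swap_def split: sum.splits)

lemma bij_fp_swap: "bij fp_swap"
  by (metis bijI injI surjI fp_swap_swap)

lemma fp_swap_simps [simp]:
  "fp_swap [] = []" "fp_swap (l # w) = case_sum Inr Inl l # fp_swap w"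
  "fp_swap (u @ v) = fp_swap u @ fp_swap v" "length (fp_swap w) = length w"
  by (simp_all add: fp_swap_def)

lemma fp_swap_eq_Nil_iff [simp]: "fp_swap w = [] \<longleftrightarrow> w = []"
  by (simp add: fp_swap_def)

lemma isl_case_sum_swap [simp]: "isl (case_sum Inr Inl l) \<longleftrightarrow> \<not> isl l"
  by (cases l) simp_all

lemma fp_swap_eq_iff [simp]: "fp_swap u = fp_swap v \<longleftrightarrow> u = v"
  by (metis fp_swap_swap)

lemma fp_swap_fp_inl [simp]: "fp_swap (fp_inl G a) = fp_inr G a"
  and fp_swap_fp_inr [simp]: "fp_swap (fp_inr H b) = fp_inl H b"
  by (simp_all add: fp_inl_def fp_inr_def)

lemma fp_reduced_swap [simp]: "fp_reduced H G (fp_swap w) \<longleftrightarrow> fp_reduced G H w"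
proof (induction w)
  case (Cons l w)
  then show ?case by (cases w) (auto simp: fp_reduced_Cons split: sum.splits)
qed simp

lemma no_last_swap [simp]:
  "no_last_Inl (fp_swap w) \<longleftrightarrow> no_last_Inr w" "no_last_Inr (fp_swap w) \<longleftrightarrow> no_last_Inl w"
  by (cases w rule: rev_cases; simp add: no_last_Inl_def no_last_Inr_def)+

lemma fp_cons_swap: "fp_cons H G (case_sum Inr Inl l) (fp_swap w) = fp_swap (fp_cons G H l w)"
proof (cases l)
  case (Inl a)
  then show ?thesis by (cases w) (auto split: sum.splits)
next
  case (Inr b)
  then show ?thesis by (cases w) (auto split: sum.splits)
qed

lemma fp_mult_swap:
  "fp_swap u \<otimes>\<^bsub>free_product H G\<^esub> fp_swap v = fp_swap (u \<otimes>\<^bsub>free_product G H\<^esub> v)"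
  by (induction u) (simp_all add: fp_cons_swap)

lemma fp_reduced_append_fp_inr:
  "fp_reduced G H x \<Longrightarrow> no_last_Inr x \<Longrightarrow> b \<in> carrier H \<Longrightarrow> fp_reduced G H (x @ fp_inr H b)"
proof -
  assume "fp_reduced G H x" "no_last_Inr x" "b \<in> carrier H"
  then have "fp_reduced H G (fp_swap x @ fp_inl H b)" by (simp add: fp_reduced_append_fp_inl)
  then show ?thesis
    by (simp only: fp_swap_fp_inr[symmetric] fp_swap_simps(3)[symmetric] fp_reduced_swap)
qed

lemma fp_mult_fp_inr:
  fixes H :: "('b, 'd) monoid_scheme" (structure)
  assumes "group H" "fp_reduced G H x" "no_last_Inr x" "b \<in> carrier H" "s \<in> carrier H"
  shows "(x @ fp_inr H b) \<otimes>\<^bsub>free_product G H\<^esub> fp_inr H s = x @ fp_inr H (b \<otimes> s)"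
  using fp_mult_fp_inl[of H G "fp_swap x" b s]
    fp_mult_swap[where u = "x @ fp_inr H b" and G = G and H = H and v = "fp_inr H s"] assms
  by (metis fp_reduced_swap fp_swap_eq_iff fp_swap_fp_inr fp_swap_simps(3) no_last_swap(1))

lemma fp_inv_fp_inr:
  fixes H :: "('b, 'd) monoid_scheme" (structure)
  assumes "group H" "s \<in> carrier H"
  shows "inv\<^bsub>free_product G H\<^esub> (fp_inr H s) = fp_inr H (inv s)"
proof -
  interpret group H by fact
  have mult: "fp_inr H a \<otimes>\<^bsub>free_product G H\<^esub> fp_inr H b = fp_inr H (a \<otimes> b)"
    if "a \<in> carrier H" "b \<in> carrier H" for a b
    using fp_mult_fp_inr[OF assms(1) fp_reduced_Nil _ that, of G] by (simp add: no_last_Inr_def)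
  have unique: "y = fp_inr H (inv s)"
    if "fp_reduced G H y" "y \<otimes>\<^bsub>free_product G H\<^esub> fp_inr H s = []" for y
    using fp_mult_fp_inl_eq_Nil[OF assms(1), of G "fp_swap y" s]
      fp_mult_swap[where u = y and G = G and H = H and v = "fp_inr H s"] that assms(2) by (metis fp_reduced_swap fp_swap_fp_inl fp_swap_fp_inr fp_swap_swap fp_swap_simps(1))
  show ?thesis
    using assms fp_reduced_append_fp_inr[of G H "[]" "inv s"] mult[of s "inv s"] mult[of "inv s" s]
    by (intro m_inv_eqI unique) (auto simp: no_last_Inr_def)
qed

section \<open>The Cayley graph of a free product\<close>

locale fp_cayley =
  fixes G :: "('a, 'c) monoid_scheme" and H :: "('b, 'd) monoid_scheme"
    and S1 :: "'a set" and S2 :: "'b set"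
  assumes group_G: "group G" and group_H: "group H"
    and S1_carrier: "S1 \<subseteq> carrier G" and S2_carrier: "S2 \<subseteq> carrier H"
    and generate_S1: "generate G S1 = carrier G" and generate_S2: "generate H S2 = carrier H"
begin

abbreviation FP where "FP \<equiv> free_product G H"
abbreviation gens where "gens \<equiv> fp_inl G ` S1 \<union> fp_inr H ` S2"
abbreviation fp_dist where "fp_dist \<equiv> cayley_dist FP gens"

lemma one_G: "\<one>\<^bsub>G\<^esub> \<in> carrier G"
  by (simp add: group.is_monoid[OF group_G])

lemma fp_gens_inv:
  "gens \<union> (\<lambda>t. inv\<^bsub>FP\<^esub> t) ` gens =
   fp_inl G ` (S1 \<union> (\<lambda>s. inv\<^bsub>G\<^esub> s) ` S1) \<union> fp_inr H ` (S2 \<union> (\<lambda>s. inv\<^bsub>H\<^esub> s) ` S2)"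
  using S1_carrier S2_carrier fp_inv_fp_inl[OF group_G, of _ H] fp_inv_fp_inr[OF group_H, of _ G]
  by (auto simp: image_Un image_image subset_iff)

lemma fp_cayley_edge_iff:
  "cayley_edge FP gens u v \<longleftrightarrow> fp_reduced G H u \<and> v \<noteq> u \<and>
     (\<exists>t \<in> fp_inl G ` (S1 \<union> (\<lambda>s. inv\<^bsub>G\<^esub> s) ` S1) \<union> fp_inr H ` (S2 \<union> (\<lambda>s. inv\<^bsub>H\<^esub> s) ` S2).
        v = u \<otimes>\<^bsub>FP\<^esub> t \<or> u = v \<otimes>\<^bsub>FP\<^esub> t)"
  unfolding cayley_edge_def fp_gens_inv by auto

end

text \<open>The geometry of branches is developed for letters of \<open>G\<close> only; \<open>fp_swap\<close> transports it
  to letters of \<open>H\<close>.\<close>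
sublocale fp_cayley \<subseteq> swapped: fp_cayley H G S2 S1
  by (simp add: fp_cayley_def group_G group_H S1_carrier S2_carrier generate_S1 generate_S2)

context fp_cayley
begin

lemma cayley_edge_swap:
  "cayley_edge swapped.FP swapped.gens (fp_swap u) (fp_swap v) \<longleftrightarrow> cayley_edge FP gens u v"
proof -
  let ?T = "fp_inl G ` (S1 \<union> (\<lambda>s. inv\<^bsub>G\<^esub> s) ` S1) \<union> fp_inr H ` (S2 \<union> (\<lambda>s. inv\<^bsub>H\<^esub> s) ` S2)"
  have T: "fp_inl H ` (S2 \<union> (\<lambda>s. inv\<^bsub>H\<^esub> s) ` S2) \<union> fp_inr G ` (S1 \<union> (\<lambda>s. inv\<^bsub>G\<^esub> s) ` S1)
      = fp_swap ` ?T"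
    by (auto simp: image_Un image_image)
  have bex: "(\<exists>t'\<in>fp_swap ` ?T. P t') \<longleftrightarrow> (\<exists>t\<in>?T. P (fp_swap t))" for P by blast
  show ?thesis
    unfolding fp_cayley_edge_iff swapped.fp_cayley_edge_iff T bex
    by (simp only: fp_mult_swap fp_swap_eq_iff fp_reduced_swap)
qed

lemma walk_swap: "walk swapped.FP swapped.gens (fp_swap u) (fp_swap v) n \<longleftrightarrow> walk FP gens u v n"
  by (rule walk_iso[OF bij_fp_swap cayley_edge_swap])

lemma cayley_dist_swap: "swapped.fp_dist (fp_swap u) (fp_swap v) = fp_dist u v"
  by (rule cayley_dist_iso[OF bij_fp_swap cayley_edge_swap])

lemma cayley_edge_fp_inl:
  assumes "fp_reduced G H x" "no_last_Inl x" "cayley_edge G S1 a b" "b \<in> carrier G"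
  shows "cayley_edge FP gens (x @ fp_inl G a) (x @ fp_inl G b)"
proof -
  interpret G: group G by (rule group_G)
  have a: "a \<in> carrier G" "b \<noteq> a" using assms(3) by (auto simp: cayley_edge_def)
  obtain s where s: "s \<in> S1 \<union> (\<lambda>s. inv\<^bsub>G\<^esub> s) ` S1" "b = a \<otimes>\<^bsub>G\<^esub> s \<or> a = b \<otimes>\<^bsub>G\<^esub> s"
    using assms(3) by (auto simp: cayley_edge_def)
  then have "s \<in> carrier G" using S1_carrier by auto
  then have "x @ fp_inl G b = (x @ fp_inl G a) \<otimes>\<^bsub>FP\<^esub> fp_inl G s \<or>
             x @ fp_inl G a = (x @ fp_inl G b) \<otimes>\<^bsub>FP\<^esub> fp_inl G s"
    using s(2) fp_mult_fp_inl[OF group_G assms(1,2)] a(1) assms(4) by auto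
  then show ?thesis
    unfolding fp_cayley_edge_iff using s(1) fp_reduced_append_fp_inl[OF assms(1,2) a(1)] a(2)
    by (auto simp del: free_product_simps)
qed

lemma walk_fp_inl:
  assumes "fp_reduced G H x" "no_last_Inl x"
  shows "walk G S1 a b n \<Longrightarrow> b \<in> carrier G \<Longrightarrow> walk FP gens (x @ fp_inl G a) (x @ fp_inl G b) n"
proof (induction rule: walk.induct)
  case (walk_step g h k n)
  have "h \<in> carrier G" using walk_start_in_carrier[OF walk_step.hyps(2) walk_step.prems] .
  then show ?case
    using walk_step cayley_edge_fp_inl[OF assms] by (blast intro: walk.walk_step)
qed (rule walk_refl)

lemma cayley_dist_fp_inl_le:
  assumes "fp_reduced G H x" "no_last_Inl x" "a \<in> carrier G" "b \<in> carrier G"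
  shows "fp_dist (x @ fp_inl G a) (x @ fp_inl G b) \<le> cayley_dist G S1 a b"
proof -
  obtain n where "walk G S1 a b n"
    using group_walk_exists[OF group_G S1_carrier generate_S1 assms(3,4)] by blast
  then obtain m where "walk G S1 a b m" "cayley_dist G S1 a b = real m"
    by (rule cayley_dist_attained)
  with walk_fp_inl[OF assms(1,2)] assms(4) show ?thesis by (metis cayley_dist_le_walk)
qed

end

context fp_cayley
begin

lemma fp_walk_from_Nil: "fp_reduced G H w \<Longrightarrow> \<exists>n. walk FP gens [] w n"
proof (induction w rule: rev_induct)
  case (snoc l y)
  then have y: "fp_reduced G H y" and l: "fp_letter G H l" and alt: "y = [] \<or> isl (last y) \<noteq> isl l"
    by (auto simp: fp_reduced_append fp_reduced_Cons)
  obtain n where "walk FP gens [] y n" using snoc.IH[OF y] by blast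
  moreover have "\<exists>m. walk FP gens y (y @ [l]) m"
  proof (cases l)
    case (Inl a)
    obtain m where m: "walk G S1 \<one>\<^bsub>G\<^esub> a m"
      using group_walk_exists[OF group_G S1_carrier generate_S1 one_G] l Inl by auto
    have "no_last_Inl y" using alt Inl by (auto simp: no_last_Inl_def)
    then have "walk FP gens (y @ fp_inl G \<one>\<^bsub>G\<^esub>) (y @ fp_inl G a) m"
      using walk_fp_inl[OF y _ m] l Inl by simp
    then show ?thesis using l Inl by (auto simp: fp_inl_def)
  next
    case (Inr b)
    obtain m where m: "walk H S2 \<one>\<^bsub>H\<^esub> b m"
      using group_walk_exists[OF group_H S2_carrier generate_S2 swapped.one_G] l Inr by auto
    have "no_last_Inl (fp_swap y)" using alt Inr by (auto simp: no_last_Inr_def)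
    then have "walk swapped.FP swapped.gens (fp_swap y @ fp_inl H \<one>\<^bsub>H\<^esub>) (fp_swap y @ fp_inl H b) m"
      using swapped.walk_fp_inl[of "fp_swap y", OF _ _ m] y l Inr by simp
    then have "walk FP gens y (y @ fp_inr H b) m"
      using walk_swap[of y "y @ fp_inr H b"] by simp
    then show ?thesis using l Inr by (auto simp: fp_inr_def)
  qed
  ultimately show ?case by (blast intro: walk_append)
qed (blast intro: walk_refl)

lemma fp_walk_exists:
  assumes "fp_reduced G H u" "fp_reduced G H v"
  shows "\<exists>n. walk FP gens u v n"
proof -
  obtain m n where "walk FP gens [] u m" "walk FP gens [] v n"
    using fp_walk_from_Nil assms by blast
  then show ?thesis using walk_sym[of FP gens "[]" u m] assms(1) by (auto intro: walk_append)
qed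

lemma cayley_edge_by_fp_inl:
  assumes "fp_reduced G H u" "fp_reduced G H v" "v \<noteq> u" "s \<in> S1 \<union> (\<lambda>s. inv\<^bsub>G\<^esub> s) ` S1"
    and "v = u \<otimes>\<^bsub>FP\<^esub> fp_inl G s \<or> u = v \<otimes>\<^bsub>FP\<^esub> fp_inl G s"
  obtains x a b where "fp_reduced G H x" "no_last_Inl x" "u = x @ fp_inl G a" "v = x @ fp_inl G b"
    "cayley_edge G S1 a b"
proof -
  interpret G: group G by (rule group_G)
  have s: "s \<in> carrier G" using assms(4) S1_carrier by auto
  have edge: "cayley_edge G S1 a (a \<otimes>\<^bsub>G\<^esub> s)" "cayley_edge G S1 (a \<otimes>\<^bsub>G\<^esub> s) a"
    if "a \<in> carrier G" "a \<otimes>\<^bsub>G\<^esub> s \<noteq> a" for a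
    using that s assms(4) unfolding cayley_edge_def by auto
  from assms(5) show thesis
  proof
    assume v: "v = u \<otimes>\<^bsub>FP\<^esub> fp_inl G s"
    obtain x a where x: "fp_reduced G H x" "no_last_Inl x" "a \<in> carrier G" "u = x @ fp_inl G a"
      using fp_reduced_split_last_Inl[OF assms(1) one_G] by blast
    then have "v = x @ fp_inl G (a \<otimes>\<^bsub>G\<^esub> s)" using v fp_mult_fp_inl[OF group_G _ _ _ s] by simp
    with x assms(3) show thesis by (intro that[OF x(1,2,4)]) (auto intro: edge)
  next
    assume u: "u = v \<otimes>\<^bsub>FP\<^esub> fp_inl G s"
    obtain x b where x: "fp_reduced G H x" "no_last_Inl x" "b \<in> carrier G" "v = x @ fp_inl G b"
      using fp_reduced_split_last_Inl[OF assms(2) one_G] by blast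
    then have "u = x @ fp_inl G (b \<otimes>\<^bsub>G\<^esub> s)" using u fp_mult_fp_inl[OF group_G _ _ _ s] by simp
    with x assms(3) show thesis by (intro that[OF x(1,2) _ x(4)]) (auto intro: edge)
  qed
qed

end

section \<open>Branches and cut points\<close>

lemma finite_longest_snoc:
  assumes "finite A" "y \<in> A" "y \<noteq> []"
  obtains x l where "x @ [l] \<in> A" "\<And>z. z \<in> A \<Longrightarrow> length z \<le> Suc (length x)"
proof -
  have fin: "finite (length ` A)" using assms(1) by simp
  obtain w where w: "w \<in> A" "length w = Max (length ` A)"
    using Max_in[OF fin] assms(2) by (metis empty_iff image_iff)
  have longest: "length z \<le> length w" if "z \<in> A" for z
    using Max_ge[OF fin] that w(2) by simp
  then have "w \<noteq> []" using assms(2,3) by fastforce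
  then obtain x l where "w = x @ [l]" by (metis rev_exhaust)
  with w(1) longest show thesis by (intro that) auto
qed

lemma sum_length_insert_Diff_less:
  assumes "finite A" "x @ [l] \<in> A \<inter> E"
  shows "(\<Sum>y\<in>insert x (A - E). length y) < (\<Sum>y\<in>A. length y)"
proof -
  have "(\<Sum>y\<in>insert x (A - E). length y) \<le> length x + (\<Sum>y\<in>A - E. length y)"
    using assms(1) by (simp add: sum.insert_if)
  also have "\<dots> < length (x @ [l]) + (\<Sum>y\<in>A - E. length y)" by simp
  also have "\<dots> \<le> (\<Sum>y\<in>A \<inter> E. length y) + (\<Sum>y\<in>A - E. length y)"
    using member_le_sum[of "x @ [l]" "A \<inter> E" length] assms by simp
  also have "\<dots> = (\<Sum>y\<in>A. length y)"
    using assms(1) by (rule sum.Int_Diff[symmetric])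
  finally show ?thesis .
qed

lemma append_short_eq_append_Cons:
  assumes "y @ p = x @ l # r" "length p \<le> 1"
  shows "(\<exists>r'. y = x @ l # r') \<or> (y = x \<and> p = [l])"
proof (cases p)
  case (Cons z p')
  with assms have "p' = []" by simp
  with Cons assms(1) show ?thesis by (cases r rule: rev_cases) auto
qed (use assms in auto)

definition Inl_branch :: "('a + 'b) list \<Rightarrow> ('a + 'b) list set" where
  "Inl_branch x = {x @ Inl c # r | c r. True}"

context fp_cayley
begin

lemma fp_edge_cases:
  assumes "cayley_edge FP gens u v" "fp_reduced G H v"
  obtains (Inl) x a b where "u = x @ fp_inl G a" "v = x @ fp_inl G b" "cayley_edge G S1 a b"
  | (Inr) x a b where "u = x @ fp_inr H a" "v = x @ fp_inr H b" "cayley_edge H S2 a b"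
proof -
  obtain t where u: "fp_reduced G H u" "v \<noteq> u"
    and t: "t \<in> fp_inl G ` (S1 \<union> (\<lambda>s. inv\<^bsub>G\<^esub> s) ` S1) \<union> fp_inr H ` (S2 \<union> (\<lambda>s. inv\<^bsub>H\<^esub> s) ` S2)"
    and vu: "v = u \<otimes>\<^bsub>FP\<^esub> t \<or> u = v \<otimes>\<^bsub>FP\<^esub> t"
    using assms(1) unfolding fp_cayley_edge_iff by (elim conjE bexE) (rule that)
  from t show thesis
  proof
    assume "t \<in> fp_inl G ` (S1 \<union> (\<lambda>s. inv\<^bsub>G\<^esub> s) ` S1)"
    then obtain s where s: "s \<in> S1 \<union> (\<lambda>s. inv\<^bsub>G\<^esub> s) ` S1" "t = fp_inl G s" by blast
    from vu have "v = u \<otimes>\<^bsub>FP\<^esub> fp_inl G s \<or> u = v \<otimes>\<^bsub>FP\<^esub> fp_inl G s"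
      unfolding s(2) .
    then obtain x a b where "u = x @ fp_inl G a" "v = x @ fp_inl G b" "cayley_edge G S1 a b"
      by (rule cayley_edge_by_fp_inl[OF u(1) assms(2) u(2) s(1)])
    then show thesis by (rule Inl)
  next
    assume "t \<in> fp_inr H ` (S2 \<union> (\<lambda>s. inv\<^bsub>H\<^esub> s) ` S2)"
    then obtain s where s: "s \<in> S2 \<union> (\<lambda>s. inv\<^bsub>H\<^esub> s) ` S2" "t = fp_inr H s" by blast
    have red: "fp_reduced H G (fp_swap u)" "fp_reduced H G (fp_swap v)" "fp_swap v \<noteq> fp_swap u"
      using u assms(2) by simp_all
    have "fp_swap v = fp_swap u \<otimes>\<^bsub>swapped.FP\<^esub> fp_inl H s \<or> fp_swap u = fp_swap v \<otimes>\<^bsub>swapped.FP\<^esub> fp_inl H s"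
      using vu s(2) fp_mult_swap[where G = G and H = H and u = u and v = "fp_inr H s"]
        fp_mult_swap[where G = G and H = H and u = v and v = "fp_inr H s"]
      by (simp del: free_product_simps)
    then obtain x a b where x: "fp_swap u = x @ fp_inl H a" "fp_swap v = x @ fp_inl H b"
      and "cayley_edge H S2 a b"
      by (rule swapped.cayley_edge_by_fp_inl[OF red s(1)])
    moreover have "u = fp_swap x @ fp_inr H a" "v = fp_swap x @ fp_inr H b"
      using arg_cong[OF x(1), of fp_swap] arg_cong[OF x(2), of fp_swap] by simp_all
    ultimately show thesis by (intro Inr)
  qed
qed

lemma cayley_edge_from_Inl_branch:
  assumes "cayley_edge FP gens u v" "fp_reduced G H v" "u = x @ Inl c # r"
  shows "(\<exists>c' r'. v = x @ Inl c' # r' \<and> (c' = c \<or> cayley_edge G S1 c c')) \<or>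
         (v = x \<and> cayley_edge G S1 c \<one>\<^bsub>G\<^esub>)"
  using assms(1,2)
proof (cases rule: fp_edge_cases)
  case (Inl y a b)
  have "y @ fp_inl G a = x @ Inl c # r" "length (fp_inl G a) \<le> 1"
    using Inl(1) assms(3) by (simp_all add: fp_inl_def)
  from append_short_eq_append_Cons[OF this] show ?thesis
  proof (elim disjE exE conjE)
    fix r' assume "y = x @ Inl c # r'"
    then show ?thesis using Inl(2) by auto
  next
    assume "y = x" "fp_inl G a = [Inl c]"
    then have "a = c" "v = x @ fp_inl G b" using Inl(2) by (auto simp: fp_inl_def split: if_splits)
    then show ?thesis using Inl(3) by (cases "b = \<one>\<^bsub>G\<^esub>") (auto simp: fp_inl_def)
  qed
next
  case (Inr y a b)
  have "y @ fp_inr H a = x @ Inl c # r" "length (fp_inr H a) \<le> 1"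
    using Inr(1) assms(3) by (simp_all add: fp_inr_def)
  from append_short_eq_append_Cons[OF this] show ?thesis
  proof (elim disjE exE conjE)
    fix r' assume "y = x @ Inl c # r'"
    then show ?thesis using Inr(2) by auto
  qed (simp add: fp_inr_def split: if_splits)
qed

definition branch_proj :: "('a + 'b) list \<Rightarrow> ('a + 'b) list \<Rightarrow> 'a" where
  "branch_proj x u = (if u \<in> Inl_branch x then projl (u ! length x) else \<one>\<^bsub>G\<^esub>)"

lemma branch_proj_fp_inl [simp]: "branch_proj x (x @ fp_inl G a) = a"
  by (auto simp: branch_proj_def Inl_branch_def fp_inl_def)

lemma branch_proj_edge:
  assumes "cayley_edge FP gens u v" "fp_reduced G H v"
  shows "branch_proj x u = branch_proj x v \<or> cayley_edge G S1 (branch_proj x u) (branch_proj x v)"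
proof (cases "u \<in> Inl_branch x")
  case True
  then obtain c r where "u = x @ Inl c # r" by (auto simp: Inl_branch_def)
  with cayley_edge_from_Inl_branch[OF assms this] show ?thesis
    by (auto simp: branch_proj_def Inl_branch_def)
next
  case u: False
  show ?thesis
  proof (cases "v \<in> Inl_branch x")
    case True
    then obtain c r where v: "v = x @ Inl c # r" by (auto simp: Inl_branch_def)
    have "fp_reduced G H u" using assms(1) by (simp add: cayley_edge_def)
    moreover have "cayley_edge FP gens v u" using cayley_edge_sym[OF assms(1)] assms(2) by simp
    ultimately have "(\<exists>c' r'. u = x @ Inl c' # r' \<and> (c' = c \<or> cayley_edge G S1 c c')) \<or>
         (u = x \<and> cayley_edge G S1 c \<one>\<^bsub>G\<^esub>)"
      using cayley_edge_from_Inl_branch[OF _ _ v] by blast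
    with u
    have "u = x" "cayley_edge G S1 c \<one>\<^bsub>G\<^esub>" by (auto simp: Inl_branch_def)
    then show ?thesis using v u cayley_edge_sym[OF _ one_G] by (auto simp: branch_proj_def)
  qed (use u in \<open>simp add: branch_proj_def\<close>)
qed

lemma walk_leaving_Inl_branch:
  "walk FP gens u z n \<Longrightarrow> fp_reduced G H z \<Longrightarrow> u \<in> Inl_branch x \<Longrightarrow> z \<notin> Inl_branch x \<Longrightarrow>
   \<exists>k m. k + m = n \<and> walk FP gens u x k \<and> walk FP gens x z m"
proof (induction rule: walk.induct)
  case (walk_step g h z n)
  have h: "fp_reduced G H h" using walk_start_in_carrier[OF walk_step.hyps(2)] walk_step.prems by simp
  obtain c r where g: "g = x @ Inl c # r" using walk_step.prems(2) by (auto simp: Inl_branch_def)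
  from cayley_edge_from_Inl_branch[OF walk_step.hyps(1) h g] show ?case
  proof
    assume "\<exists>c' r'. h = x @ Inl c' # r' \<and> (c' = c \<or> cayley_edge G S1 c c')"
    then have "h \<in> Inl_branch x" by (auto simp: Inl_branch_def)
    then obtain k m where "k + m = n" "walk FP gens h x k" "walk FP gens x z m"
      using walk_step.IH walk_step.prems by blast
    then show ?case using walk.walk_step[OF walk_step.hyps(1)] by (metis add_Suc)
  next
    assume "h = x \<and> cayley_edge G S1 c \<one>\<^bsub>G\<^esub>"
    then show ?case using walk_step.hyps walk_edge by (intro exI[of _ 1] exI[of _ n]) auto
  qed
qed simp

lemma cayley_dist_fp_inl:
  assumes "fp_reduced G H x" "no_last_Inl x" "a \<in> carrier G" "b \<in> carrier G"
  shows "fp_dist (x @ fp_inl G a) (x @ fp_inl G b) = cayley_dist G S1 a b"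
proof -
  have red: "fp_reduced G H (x @ fp_inl G a)" "fp_reduced G H (x @ fp_inl G b)"
    using fp_reduced_append_fp_inl[OF assms(1,2)] assms(3,4) by auto
  obtain n where "walk FP gens (x @ fp_inl G a) (x @ fp_inl G b) n"
    using fp_walk_exists[OF red] by blast
  then have "cayley_dist G S1 (branch_proj x (x @ fp_inl G a)) (branch_proj x (x @ fp_inl G b))
      \<le> fp_dist (x @ fp_inl G a) (x @ fp_inl G b)"
  proof (rule cayley_dist_map_le[rotated])
    fix u v assume "u \<in> carrier FP" "v \<in> carrier FP" "cayley_edge FP gens u v"
    then show "branch_proj x u = branch_proj x v \<or> cayley_edge G S1 (branch_proj x u) (branch_proj x v)"
      using branch_proj_edge by simp
  qed (use red(2) in simp)
  then show ?thesis using cayley_dist_fp_inl_le[OF assms] by simp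
qed

text \<open>Every path out of the branch at \<open>x\<close> passes through \<open>x\<close>.\<close>
lemma cayley_dist_Inl_cut_point:
  assumes "fp_reduced G H x" "no_last_Inl x" "c \<in> carrier G" "fp_reduced G H z" "z \<notin> Inl_branch x"
  shows "fp_dist (x @ fp_inl G c) z = fp_dist (x @ fp_inl G c) x + fp_dist x z"
proof (cases "c = \<one>\<^bsub>G\<^esub>")
  case False
  let ?u = "x @ fp_inl G c"
  have "fp_reduced G H ?u" using fp_reduced_append_fp_inl[OF assms(1-3)] .
  then obtain n where "walk FP gens ?u z n" using fp_walk_exists assms(4) by blast
  then obtain n where n: "walk FP gens ?u z n" "fp_dist ?u z = real n"
    by (rule cayley_dist_attained)
  have "?u \<in> Inl_branch x" using False by (auto simp: fp_inl_def Inl_branch_def)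
  then obtain k m where km: "k + m = n" "walk FP gens ?u x k" "walk FP gens x z m"
    using walk_leaving_Inl_branch[OF n(1) assms(4) _ assms(5)] by blast
  have "fp_dist ?u x + fp_dist x z \<le> fp_dist ?u z"
    using cayley_dist_le_walk[OF km(2)] cayley_dist_le_walk[OF km(3)] km(1) n(2) by simp
  with cayley_dist_triangle[OF km(2,3)] show ?thesis by simp
qed simp

lemma fp_Inl_branch_cut_point:
  assumes csnd_G: "cond_strict_neg_def (carrier G) (cayley_dist G S1)"
    and x: "fp_reduced G H x" "no_last_Inl x"
  defines "E \<equiv> (\<lambda>c. x @ fp_inl G c) ` carrier G"
  shows "cond_strict_neg_def E fp_dist"
    and "\<And>u y. u \<in> E \<Longrightarrow> fp_reduced G H y \<Longrightarrow> length y \<le> Suc (length x) \<Longrightarrow> y \<notin> E - {x} \<Longrightarrow>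
           fp_dist u y = fp_dist u x + fp_dist x y"
proof -
  show "cond_strict_neg_def E fp_dist"
    unfolding E_def using cayley_dist_fp_inl[OF x]
    by (intro cond_strict_neg_def_image[OF csnd_G]) (auto intro: inj_onI)
next
  fix u y assume u: "u \<in> E" and y: "fp_reduced G H y" "length y \<le> Suc (length x)" "y \<notin> E - {x}"
  have "y \<notin> Inl_branch x"
  proof
    assume "y \<in> Inl_branch x"
    then obtain c where c: "y = x @ [Inl c]" using y(2) by (auto simp: Inl_branch_def)
    then have "c \<in> carrier G" "c \<noteq> \<one>\<^bsub>G\<^esub>" using y(1) by (auto simp: fp_reduced_append fp_reduced_Cons)
    with c y(3) show False by (auto simp: E_def fp_inl_def)
  qed
  with u y(1) show "fp_dist u y = fp_dist u x + fp_dist x y"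
    unfolding E_def using cayley_dist_Inl_cut_point[OF x] by auto
qed

end

context fp_cayley
begin

lemma fp_Inr_branch_cut_point:
  assumes csnd_H: "cond_strict_neg_def (carrier H) (cayley_dist H S2)"
    and x: "fp_reduced G H x" "no_last_Inr x"
  defines "E \<equiv> (\<lambda>c. x @ fp_inr H c) ` carrier H"
  shows "cond_strict_neg_def E fp_dist"
    and "\<And>u y. u \<in> E \<Longrightarrow> fp_reduced G H y \<Longrightarrow> length y \<le> Suc (length x) \<Longrightarrow> y \<notin> E - {x} \<Longrightarrow>
           fp_dist u y = fp_dist u x + fp_dist x y"
proof -
  let ?E' = "(\<lambda>c. fp_swap x @ fp_inl H c) ` carrier H"
  have x': "fp_reduced H G (fp_swap x)" "no_last_Inl (fp_swap x)" using x by simp_all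
  note E' = swapped.fp_Inl_branch_cut_point[OF csnd_H x']
  have E: "E = fp_swap ` ?E'" unfolding E_def by (simp add: image_image)
  show "cond_strict_neg_def E fp_dist"
    unfolding E
  proof (rule cond_strict_neg_def_image[OF E'(1)])
    show "inj_on fp_swap ?E'" using bij_is_inj[OF bij_fp_swap] by (rule inj_on_subset) simp
  qed (rule swapped.cayley_dist_swap)
  show "fp_dist u y = fp_dist u x + fp_dist x y"
    if u: "u \<in> E" and y: "fp_reduced G H y" "length y \<le> Suc (length x)" "y \<notin> E - {x}" for u y
  proof -
    obtain u' where u': "u = fp_swap u'" "u' \<in> ?E'" using u unfolding E by (rule imageE)
    have y': "fp_swap y \<notin> ?E' - {fp_swap x}"
    proof
      assume "fp_swap y \<in> ?E' - {fp_swap x}"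
      then have "fp_swap y \<in> ?E'" "y \<noteq> x" by auto
      then have "y \<in> E - {x}" unfolding E using image_eqI[of y fp_swap "fp_swap y"] by simp
      with y(3) show False ..
    qed
    have "swapped.fp_dist u' (fp_swap y) =
        swapped.fp_dist u' (fp_swap x) + swapped.fp_dist (fp_swap x) (fp_swap y)"
      using E'(2)[OF u'(2) _ _ y'] y(1,2) by simp
    then show ?thesis
      using cayley_dist_swap[of u y] cayley_dist_swap[of u x] cayley_dist_swap[of x y]
      unfolding u'(1) by simp
  qed
qed

lemma fp_last_letter_cut_point:
  assumes csnd_G: "cond_strict_neg_def (carrier G) (cayley_dist G S1)"
    and csnd_H: "cond_strict_neg_def (carrier H) (cayley_dist H S2)"
    and red: "fp_reduced G H (x @ [l])"
  obtains E where "x \<in> E" "x @ [l] \<in> E" "E \<subseteq> carrier FP" "cond_strict_neg_def E fp_dist"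
    "\<And>u y. u \<in> E \<Longrightarrow> fp_reduced G H y \<Longrightarrow> length y \<le> Suc (length x) \<Longrightarrow> y \<notin> E - {x} \<Longrightarrow>
       fp_dist u y = fp_dist u x + fp_dist x y"
proof (cases l)
  case (Inl a)
  with red have x: "fp_reduced G H x" "no_last_Inl x" and a: "a \<in> carrier G" "a \<noteq> \<one>\<^bsub>G\<^esub>"
    by (auto simp: fp_reduced_append fp_reduced_Cons no_last_Inl_def)
  let ?E = "(\<lambda>c. x @ fp_inl G c) ` carrier G"
  have "x = x @ fp_inl G \<one>\<^bsub>G\<^esub>" "x @ [l] = x @ fp_inl G a" using a Inl by (simp_all add: fp_inl_def)
  then have "x \<in> ?E" "x @ [l] \<in> ?E" using one_G a(1) by (metis image_eqI)+
  moreover have "?E \<subseteq> carrier FP" using fp_reduced_append_fp_inl[OF x] by auto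
  ultimately show thesis by (rule that[OF _ _ _ fp_Inl_branch_cut_point[OF csnd_G x]])
next
  case (Inr b)
  with red have x: "fp_reduced G H x" "no_last_Inr x" and b: "b \<in> carrier H" "b \<noteq> \<one>\<^bsub>H\<^esub>"
    by (auto simp: fp_reduced_append fp_reduced_Cons no_last_Inr_def)
  let ?E = "(\<lambda>c. x @ fp_inr H c) ` carrier H"
  have "x = x @ fp_inr H \<one>\<^bsub>H\<^esub>" "x @ [l] = x @ fp_inr H b" using b Inr by (simp_all add: fp_inr_def)
  then have "x \<in> ?E" "x @ [l] \<in> ?E" using swapped.one_G b(1) by (metis image_eqI)+
  moreover have "?E \<subseteq> carrier FP" using fp_reduced_append_fp_inr[OF x] by auto
  ultimately show thesis by (rule that[OF _ _ _ fp_Inr_branch_cut_point[OF csnd_H x]])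
qed

lemma fp_kernel_form_neg:
  assumes csnd_G: "cond_strict_neg_def (carrier G) (cayley_dist G S1)"
    and csnd_H: "cond_strict_neg_def (carrier H) (cayley_dist H S2)"
  shows "finite A \<Longrightarrow> A \<subseteq> carrier FP \<Longrightarrow> (\<And>x. x \<notin> A \<Longrightarrow> u x = 0) \<Longrightarrow> sum u A = 0 \<Longrightarrow>
    \<exists>x. u x \<noteq> 0 \<Longrightarrow> kernel_form fp_dist A u u < 0"
proof (induction "\<Sum>y\<in>A. length y" arbitrary: A u rule: less_induct)
  case less
  have "\<exists>y\<in>A. y \<noteq> []"
  proof (rule ccontr)
    assume "\<not> (\<exists>y\<in>A. y \<noteq> [])"
    then have "A \<subseteq> {[]}" by blast
    obtain z where z: "u z \<noteq> 0" using less.prems(5) by blast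
    then have "z \<in> A" using less.prems(3) by blast
    with \<open>A \<subseteq> {[]}\<close> have "A = {[]}" "z = []" by auto
    with less.prems(4) z show False by simp
  qed
  then obtain x l where xl: "x @ [l] \<in> A" and longest: "\<And>y. y \<in> A \<Longrightarrow> length y \<le> Suc (length x)"
    using less.prems(1) by (metis finite_longest_snoc)
  have "fp_reduced G H (x @ [l])" using xl less.prems(2) by auto
  then obtain E where E: "x \<in> E" "x @ [l] \<in> E" "E \<subseteq> carrier FP" "cond_strict_neg_def E fp_dist"
    and cut: "\<And>v y. v \<in> E \<Longrightarrow> fp_reduced G H y \<Longrightarrow> length y \<le> Suc (length x) \<Longrightarrow> y \<notin> E - {x} \<Longrightarrow>
       fp_dist v y = fp_dist v x + fp_dist x y"
    by (rule fp_last_letter_cut_point[OF csnd_G csnd_H]) (rule that)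
  let ?B = "insert x (A - E)"
  have B: "finite ?B" "?B \<subseteq> carrier FP" using less.prems(1,2) E(1,3) by auto
  have shorter: "(\<Sum>y\<in>?B. length y) < (\<Sum>y\<in>A. length y)"
    using sum_length_insert_Diff_less[OF less.prems(1)] xl E(2) by blast
  show ?case
  proof (rule kernel_form_neg_cut_point[OF E(4,1) _ less.prems(1,3-5)])
    fix v y assume v: "v \<in> E" and y: "y \<in> ?B"
    have "fp_reduced G H y" using y B(2) by auto
    moreover have "length y \<le> Suc (length x)" using y longest by auto
    moreover have "y \<notin> E - {x}" using y by blast
    moreover have "fp_dist y v = fp_dist v y"
      using v y B(2) E(3) by (intro cayley_dist_sym) auto
    ultimately show "fp_dist v y = fp_dist v x + fp_dist x y \<and> fp_dist y v = fp_dist v y"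
      using cut[OF v] by simp
  next
    fix v :: "_ \<Rightarrow> complex" assume "\<And>y. y \<notin> ?B \<Longrightarrow> v y = 0" "sum v ?B = 0" "\<exists>y. v y \<noteq> 0"
    then show "kernel_form fp_dist ?B v v < 0" using less.hyps[OF shorter B] by blast
  qed
qed

end

theorem mainTheorem10:
  fixes G :: "'a monoid" and H :: "'b monoid" and S1 :: "'a set" and S2 :: "'b set"
  assumes "group G" and "group H"
    and "S1 \<subseteq> carrier G" and "S2 \<subseteq> carrier H"
    and "generate G S1 = carrier G" and "generate H S2 = carrier H"
    and "cond_strict_neg_def (carrier G) (cayley_dist G S1)"
    and "cond_strict_neg_def (carrier H) (cayley_dist H S2)"
  shows "cond_strict_neg_def (carrier (free_product G H))
           (cayley_dist (free_product G H) (fp_inl G ` S1 \<union> fp_inr H ` S2))"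
proof -
  interpret fp_cayley G H S1 S2 by (rule fp_cayley.intro) fact+
  show ?thesis
    by (rule cond_strict_neg_defI) (rule fp_kernel_form_neg[OF assms(7,8)])
qed

end
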